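(* If $\gamma=-\phi$ (i.e. $\gamma[b]=-\phi[b]1_{\mathcal B}$ for all $b$), then for $u_1,\dots,u_n\in\mathcal B$, $B_n[X(u_1),\dots,X(u_n)]=\langle a^-(u_1)a^0(u_2)\cdots a^0(u_{n-1})a^+(u_n)\Omega,\Omega\rangle_{\gamma,\phi}$.
   Context: Let $\mathcal B$ be a unital $*$-algebra with star-linear maps $\phi:\mathcal B\to\mathbb C$, $\gamma:\mathcal B\to\mathcal B$, $\Lambda:\mathcal B\otimes_{alg}\mathcal B\to\mathcal B$, where $\phi$ is positive and faithful and $\gamma+\phi$ is completely positive, with $(\gamma+\phi)[b]:=\gamma[b]+\phi[b]1_{\mathcal B}$. Assume $\phi[v^*\Lambda(b\otimes u)]=\phi[\Lambda(b^*\otimes v)^*u]$ and $\gamma[v^*\Lambda(b\otimes u)]=\gamma[\Lambda(b^*\otimes v)^*u]$ for all $b,u,v$. On $\mathcal F_{alg}(\mathcal B)=\mathbb C\Omega\oplus\bigoplus_{n\ge1}\mathcal B^{\otimes n}$ use the form $\langle\Omega,\Omega\rangle_{\gamma,\phi}=1$, $\langle u_1\otimes\cdots\otimes u_n,v_1\otimes\cdots\otimes v_k\rangle_{\gamma,\phi}=\delta_{n=k}\phi[v_n^*(\gamma+\phi)[v_{n-1}^*\cdots(\gamma+\phi)[v_1^*u_1]\cdots u_{n-1}]u_n]$. For $b\in\mathcal B$: $a^+(b)\Omega=b$, $a^+(b)(u_1\otimes\cdots\otimes u_n)=b\otimes u_1\otimes\cdots\otimes u_n$; $a^-(b)\Omega=0$,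 $a^-(b)u_1=\phi[bu_1]\Omega$, $a^-(b)(u_1\otimes\cdots\otimes u_n)=(\gamma+\phi)[bu_1]u_2\otimes\cdots\otimes u_n$ ($n\ge2$); $a^0(b)\Omega=0$, $a^0(b)(u_1\otimes\cdots\otimes u_n)=\Lambda(b\otimes u_1)\otimes u_2\otimes\cdots\otimes u_n$; $X(b)=a^+(b)+a^-(b)+a^0(b)$. Boolean cumulants $B_k$ with respect to $\psi(A)=\langle A\Omega,\Omega\rangle_{\gamma,\phi}$ are defined by $\psi[Y_1\cdots Y_n]=\sum_{\pi\in\mathrm{Int}(n)}\prod_{V\in\pi}B_{|V|}[Y_{V(1)},\dots,Y_{V(|V|)}]$, $\mathrm{Int}(n)$ the interval partitions of $\{1,\dots,n\}$. *)

theory Defs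
  imports Complex_Main
begin

definition complex_star_algebra :: "(complex \<Rightarrow> 'b::ring_1 \<Rightarrow> 'b) \<Rightarrow> ('b \<Rightarrow> 'b) \<Rightarrow> bool" where
  "complex_star_algebra sc st \<longleftrightarrow>
     (\<forall>c x y. sc c (x + y) = sc c x + sc c y) \<and>
     (\<forall>c d x. sc (c + d) x = sc c x + sc d x) \<and>
     (\<forall>c d x. sc (c * d) x = sc c (sc d x)) \<and>
     (\<forall>x. sc 1 x = x) \<and>
     (\<forall>c x y. sc c (x * y) = sc c x * y \<and> sc c (x * y) = x * sc c y) \<and>
     (\<forall>x y. st (x + y) = st x + st y) \<and>
     (\<forall>c x. st (sc c x) = sc (cnj c) (st x)) \<and>
     (\<forall>x y. st (x * y) = st y * st x) \<and>
     (\<forall>x. st (st x) = x)"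

text \<open>Linear functionals, linear maps and bilinear maps (the latter represent linear
maps on the algebraic tensor product B \<otimes> B, by its universal property).\<close>

definition clinear_functional :: "(complex \<Rightarrow> 'b::ring_1 \<Rightarrow> 'b) \<Rightarrow> ('b \<Rightarrow> complex) \<Rightarrow> bool" where
  "clinear_functional sc f \<longleftrightarrow> (\<forall>x y. f (x + y) = f x + f y) \<and> (\<forall>c x. f (sc c x) = c * f x)"

definition clinear_map :: "(complex \<Rightarrow> 'b::ring_1 \<Rightarrow> 'b) \<Rightarrow> ('b \<Rightarrow> 'b) \<Rightarrow> bool" where
  "clinear_map sc f \<longleftrightarrow> (\<forall>x y. f (x + y) = f x + f y) \<and> (\<forall>c x. f (sc c x) = sc c (f x))"

definition cbilinear_map :: "(complex \<Rightarrow> 'b::ring_1 \<Rightarrow> 'b) \<Rightarrow> ('b \<Rightarrow> 'b \<Rightarrow> 'b) \<Rightarrow> bool" where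
  "cbilinear_map sc L \<longleftrightarrow> (\<forall>x. clinear_map sc (L x)) \<and> (\<forall>y. clinear_map sc (\<lambda>x. L x y))"

definition star_functional :: "('b \<Rightarrow> 'b) \<Rightarrow> ('b \<Rightarrow> complex) \<Rightarrow> bool" where
  "star_functional st f \<longleftrightarrow> (\<forall>x. f (st x) = cnj (f x))"

definition star_map :: "('b \<Rightarrow> 'b) \<Rightarrow> ('b \<Rightarrow> 'b) \<Rightarrow> bool" where
  "star_map st f \<longleftrightarrow> (\<forall>x. f (st x) = st (f x))"

definition star_bimap :: "('b \<Rightarrow> 'b) \<Rightarrow> ('b \<Rightarrow> 'b \<Rightarrow> 'b) \<Rightarrow> bool" where
  "star_bimap st L \<longleftrightarrow> (\<forall>x y. L (st x) (st y) = st (L x y))"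

definition positive_functional :: "('b::ring_1 \<Rightarrow> 'b) \<Rightarrow> ('b \<Rightarrow> complex) \<Rightarrow> bool" where
  "positive_functional st f \<longleftrightarrow> (\<forall>b. Im (f (st b * b)) = 0 \<and> Re (f (st b * b)) \<ge> 0)"

definition faithful_functional :: "('b::ring_1 \<Rightarrow> 'b) \<Rightarrow> ('b \<Rightarrow> complex) \<Rightarrow> bool" where
  "faithful_functional st f \<longleftrightarrow> (\<forall>b. f (st b * b) = 0 \<longrightarrow> b = 0)"

definition pos_cone :: "('b::ring_1 \<Rightarrow> 'b) \<Rightarrow> 'b set" where
  "pos_cone st = {sum_list (map (\<lambda>x. st x * x) xs) | xs. True}"

definition completely_positive :: "('b::ring_1 \<Rightarrow> 'b) \<Rightarrow> ('b \<Rightarrow> 'b) \<Rightarrow> bool" where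
  "completely_positive st T \<longleftrightarrow>
     (\<forall>n::nat. \<forall>a b :: nat \<Rightarrow> 'b.
        (\<Sum>i<n. \<Sum>j<n. st (a i) * T (st (b i) * b j) * a j) \<in> pos_cone st)"

definition gpp :: "(complex \<Rightarrow> 'b::ring_1 \<Rightarrow> 'b) \<Rightarrow> ('b \<Rightarrow> complex) \<Rightarrow> ('b \<Rightarrow> 'b) \<Rightarrow> 'b \<Rightarrow> 'b" where
  "gpp sc phi gamma b = gamma b + sc (phi b) 1"

text \<open>An element of F_alg(B) is represented by a formal finite linear combination of
elementary tensors: a list of pairs (coefficient, word), where the empty word []
stands for the vacuum Omega and the word [u1,...,un] for u1 \<otimes> ... \<otimes> un.\<close>

type_synonym 'b fvec = "(complex \<times> 'b list) list"

definition vac :: "'b fvec" where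
  "vac = [(1, [])]"

definition lift_op :: "('b list \<Rightarrow> 'b fvec) \<Rightarrow> 'b fvec \<Rightarrow> 'b fvec" where
  "lift_op f v = concat (map (\<lambda>(c, w). map (\<lambda>(d, w'). (c * d, w')) (f w)) v)"

definition aplus :: "'b \<Rightarrow> 'b fvec \<Rightarrow> 'b fvec" where
  "aplus b = lift_op (\<lambda>w. [(1, b # w)])"

fun aminus_el :: "(complex \<Rightarrow> 'b::ring_1 \<Rightarrow> 'b) \<Rightarrow> ('b \<Rightarrow> complex) \<Rightarrow> ('b \<Rightarrow> 'b) \<Rightarrow> 'b \<Rightarrow> 'b list \<Rightarrow> 'b fvec" where
  "aminus_el sc phi gamma b [] = []"
| "aminus_el sc phi gamma b [u1] = [(phi (b * u1), [])]"
| "aminus_el sc phi gamma b (u1 # u2 # us) = [(1, gpp sc phi gamma (b * u1) * u2 # us)]"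

definition aminus :: "(complex \<Rightarrow> 'b::ring_1 \<Rightarrow> 'b) \<Rightarrow> ('b \<Rightarrow> complex) \<Rightarrow> ('b \<Rightarrow> 'b) \<Rightarrow> 'b \<Rightarrow> 'b fvec \<Rightarrow> 'b fvec" where
  "aminus sc phi gamma b = lift_op (aminus_el sc phi gamma b)"

fun azero_el :: "('b \<Rightarrow> 'b \<Rightarrow> 'b) \<Rightarrow> 'b \<Rightarrow> 'b list \<Rightarrow> 'b fvec" where
  "azero_el L b [] = []"
| "azero_el L b (u1 # us) = [(1, L b u1 # us)]"

definition azero :: "('b \<Rightarrow> 'b \<Rightarrow> 'b) \<Rightarrow> 'b \<Rightarrow> 'b fvec \<Rightarrow> 'b fvec" where
  "azero L b = lift_op (azero_el L b)"

definition Xop :: "(complex \<Rightarrow> 'b::ring_1 \<Rightarrow> 'b) \<Rightarrow> ('b \<Rightarrow> complex) \<Rightarrow> ('b \<Rightarrow> 'b) \<Rightarrow> ('b \<Rightarrow> 'b \<Rightarrow> 'b)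
     \<Rightarrow> 'b \<Rightarrow> 'b fvec \<Rightarrow> 'b fvec" where
  "Xop sc phi gamma L b v = aplus b v @ aminus sc phi gamma b v @ azero L b v"

text \<open>The form <.,.>_{gamma,phi}: on elementary tensors
<u1..un, v1..vn> = phi[vn* T[v(n-1)* ... T[v1* u1] ... u(n-1)] un], T = gamma + phi;
extended sesquilinearly (linear in the first, conjugate linear in the second slot).\<close>

fun ip_chain :: "('b::ring_1 \<Rightarrow> 'b) \<Rightarrow> ('b \<Rightarrow> 'b) \<Rightarrow> 'b list \<Rightarrow> 'b list \<Rightarrow> 'b \<Rightarrow> 'b" where
  "ip_chain st T (u # us) (v # vs) g = ip_chain st T us vs (st v * T g * u)"
| "ip_chain st T _ _ g = g"

fun ip_elem :: "(complex \<Rightarrow> 'b::ring_1 \<Rightarrow> 'b) \<Rightarrow> ('b \<Rightarrow> 'b) \<Rightarrow> ('b \<Rightarrow> complex) \<Rightarrow> ('b \<Rightarrow> 'b)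
     \<Rightarrow> 'b list \<Rightarrow> 'b list \<Rightarrow> complex" where
  "ip_elem sc st phi gamma [] [] = 1"
| "ip_elem sc st phi gamma (u # us) (v # vs) =
     (if length us = length vs
      then phi (ip_chain st (gpp sc phi gamma) us vs (st v * u)) else 0)"
| "ip_elem sc st phi gamma _ _ = 0"

definition fock_ip :: "(complex \<Rightarrow> 'b::ring_1 \<Rightarrow> 'b) \<Rightarrow> ('b \<Rightarrow> 'b) \<Rightarrow> ('b \<Rightarrow> complex) \<Rightarrow> ('b \<Rightarrow> 'b)
     \<Rightarrow> 'b fvec \<Rightarrow> 'b fvec \<Rightarrow> complex" where
  "fock_ip sc st phi gamma v w =
     sum_list (map (\<lambda>(c, x). sum_list (map (\<lambda>(d, y). c * cnj d * ip_elem sc st phi gamma x y) w)) v)"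

definition vac_state :: "(complex \<Rightarrow> 'b::ring_1 \<Rightarrow> 'b) \<Rightarrow> ('b \<Rightarrow> 'b) \<Rightarrow> ('b \<Rightarrow> complex) \<Rightarrow> ('b \<Rightarrow> 'b)
     \<Rightarrow> ('b fvec \<Rightarrow> 'b fvec) \<Rightarrow> complex" where
  "vac_state sc st phi gamma A = fock_ip sc st phi gamma (A vac) vac"

text \<open>Interval partitions of {1..n}, encoded by the sequence of their block sizes
(compositions of n); chunks cuts a list into consecutive blocks.\<close>

definition interval_partitions :: "nat \<Rightarrow> nat list set" where
  "interval_partitions n = {ks. (\<forall>k\<in>set ks. 0 < k) \<and> sum_list ks = n}"

fun chunks :: "nat list \<Rightarrow> 'a list \<Rightarrow> 'a list list" where
  "chunks [] xs = []"
| "chunks (k # ks) xs = take k xs # chunks ks (drop k xs)"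

definition op_prod :: "('a \<Rightarrow> 'a) list \<Rightarrow> 'a \<Rightarrow> 'a" where
  "op_prod Ys = foldr (\<circ>) Ys id"

definition boolean_cumulants :: "((('a \<Rightarrow> 'a)) \<Rightarrow> complex) \<Rightarrow> (('a \<Rightarrow> 'a) list \<Rightarrow> complex) \<Rightarrow> bool" where
  "boolean_cumulants psi Bc \<longleftrightarrow>
     (\<forall>Ys. Ys \<noteq> [] \<longrightarrow>
        psi (op_prod Ys) = (\<Sum>ks\<in>interval_partitions (length Ys). prod_list (map Bc (chunks ks Ys))))"

end

theory Submission
  imports Defs
begin

(* Only the vacuum coefficient and the one-particle component of X(u_1) ... X(u_n) Omega
   enter the vacuum state, and when gamma + phi = 0 these two evolve in closed form:
   a^-(u) sends u_1 (x) u_2 to (gamma + phi)[u u_1] u_2 = 0, so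
     vac(X(u) w) = phi[u w_1],   w_1(X(u) w) = vac(w) u + Lambda(u (x) w_1).
   Unwinding gives the moment recursion m(u_1..u_n) = sum_k c(u_1..u_k) m(u_{k+1}..u_n) with
   c(u_1..u_k) = phi[u_1 Lambda(u_2 (x) Lambda(... (x) u_k))] for k >= 2 and c(u_1) = 0.
   Expanding the recursion over interval partitions exhibits c as a family satisfying the
   Boolean moment-cumulant relation, which determines the cumulants uniquely; and c(u_1..u_n)
   is exactly the vacuum expectation on the right-hand side. *)

lemma interval_partitions_0: "interval_partitions 0 = {[]}"
  by (auto simp: interval_partitions_def sum_list_eq_0_iff) (metis ex_in_conv less_irrefl set_empty)

lemma interval_partitions_Suc:
  "interval_partitions (Suc m) = (\<Union>k<Suc m. Cons (Suc k) ` interval_partitions (m - k))"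
proof (intro equalityI subsetI)
  fix ks assume "ks \<in> interval_partitions (Suc m)"
  then have pos: "\<forall>k\<in>set ks. 0 < k" and sum: "sum_list ks = Suc m"
    by (auto simp: interval_partitions_def)
  then obtain k r where "ks = Suc k # r"
    by (cases ks) (auto simp: gr0_conv_Suc)
  with pos sum show "ks \<in> (\<Union>k<Suc m. Cons (Suc k) ` interval_partitions (m - k))"
    by (auto simp: interval_partitions_def intro!: bexI[of _ k])
qed (auto simp: interval_partitions_def)

lemma finite_interval_partitions: "finite (interval_partitions n)"
proof (induction n rule: less_induct)
  case (less n)
  then show ?case
    by (cases n) (simp_all add: interval_partitions_0 interval_partitions_Suc del: lessThan_Suc)
qed

lemma sum_interval_partitions_Suc:
  "(\<Sum>ks\<in>interval_partitions (Suc m). g ks) =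
   (\<Sum>k<Suc m. \<Sum>ks\<in>interval_partitions (m - k). g (Suc k # ks))"
proof -
  have "(\<Sum>ks\<in>interval_partitions (Suc m). g ks) =
     (\<Sum>k<Suc m. \<Sum>ks\<in>Cons (Suc k) ` interval_partitions (m - k). g ks)"
    unfolding interval_partitions_Suc
    by (rule sum.UNION_disjoint) (auto simp: finite_interval_partitions)
  also have "\<dots> = (\<Sum>k<Suc m. \<Sum>ks\<in>interval_partitions (m - k). g (Suc k # ks))"
    by (simp add: sum.reindex)
  finally show ?thesis .
qed

lemma interval_partitions_member_less:
  assumes "ks \<in> interval_partitions n" "ks \<noteq> [n]" "k \<in> set ks"
  shows "k < n"
proof -
  obtain as bs where ks: "ks = as @ k # bs"
    using assms(3) by (meson split_list)
  have pos: "\<forall>k\<in>set ks. 0 < k" and sum: "sum_list ks = n"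
    using assms(1) by (auto simp: interval_partitions_def)
  have "as @ bs \<noteq> []"
    using assms(2) sum ks by auto
  then obtain j where "j \<in> set (as @ bs)" "0 < j"
    using pos ks by (metis Un_iff last_in_set set_append set_subset_Cons subsetD)
  then have "0 < sum_list (as @ bs)"
    using member_le_sum_list by fastforce
  then show ?thesis
    using sum ks by auto
qed

lemma chunks_map: "chunks ks (map f xs) = map (map f) (chunks ks xs)"
  by (induction ks arbitrary: xs) (auto simp: take_map drop_map)

lemma length_chunks_member:
  "sum_list ks = length xs \<Longrightarrow> ys \<in> set (chunks ks xs) \<Longrightarrow> length ys \<in> set ks"
  by (induction ks arbitrary: xs) fastforce+

lemma sum_interval_partitions_first_block:
  fixes m :: "'a list \<Rightarrow> 'c::semiring_1" and c :: "'a list \<Rightarrow> 'c"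
  assumes m_Nil: "m [] = 1"
    and m_first_block:
      "\<And>xs. xs \<noteq> [] \<Longrightarrow> m xs = (\<Sum>k<length xs. c (take (Suc k) xs) * m (drop (Suc k) xs))"
  shows "m xs = (\<Sum>ks\<in>interval_partitions (length xs). prod_list (map c (chunks ks xs)))"
proof (induction "length xs" arbitrary: xs rule: less_induct)
  case less
  show ?case
  proof (cases xs)
    case Nil
    then show ?thesis by (simp add: m_Nil interval_partitions_0)
  next
    case (Cons x r)
    have "(\<Sum>ks\<in>interval_partitions (length xs). prod_list (map c (chunks ks xs)))
      = (\<Sum>k<length xs. \<Sum>ks\<in>interval_partitions (length (drop (Suc k) xs)).
           c (take (Suc k) xs) * prod_list (map c (chunks ks (drop (Suc k) xs))))"
      using Cons by (simp add: sum_interval_partitions_Suc del: lessThan_Suc)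
    also have "\<dots> = (\<Sum>k<length xs. c (take (Suc k) xs) * m (drop (Suc k) xs))"
      using less Cons by (simp add: sum_distrib_left)
    also have "\<dots> = m xs"
      using m_first_block Cons by simp
    finally show ?thesis ..
  qed
qed

lemma sum_interval_partitions_unique:
  fixes c d :: "'a list \<Rightarrow> 'c::semiring_1_cancel"
  assumes same_sums: "\<And>ys. ys \<noteq> [] \<Longrightarrow>
      (\<Sum>ks\<in>interval_partitions (length ys). prod_list (map c (chunks ks ys))) =
      (\<Sum>ks\<in>interval_partitions (length ys). prod_list (map d (chunks ks ys)))"
    and "xs \<noteq> []"
  shows "c xs = d xs"
  using \<open>xs \<noteq> []\<close>
proof (induction "length xs" arbitrary: xs rule: less_induct)
  case less
  define n where "n = length xs"
  define I where "I = interval_partitions n - {[n]}"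
  have n_mem: "[n] \<in> interval_partitions n"
    using less.prems by (auto simp: interval_partitions_def n_def)
  have "prod_list (map c (chunks ks xs)) = prod_list (map d (chunks ks xs))" if "ks \<in> I" for ks
  proof -
    have "c ys = d ys" if "ys \<in> set (chunks ks xs)" for ys
    proof -
      have "length ys \<in> set ks"
        using \<open>ks \<in> I\<close> that length_chunks_member
        by (fastforce simp: I_def interval_partitions_def n_def)
      then have "0 < length ys" "length ys < n"
        using \<open>ks \<in> I\<close> interval_partitions_member_less
        by (auto simp: I_def interval_partitions_def)
      then show ?thesis
        using less.hyps n_def by auto
    qed
    then show ?thesis
      by (metis map_eq_conv)
  qed
  then have rest: "(\<Sum>ks\<in>I. prod_list (map c (chunks ks xs))) = (\<Sum>ks\<in>I. prod_list (map d (chunks ks xs)))"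
    by (rule sum.cong[OF refl])
  have "(\<Sum>ks\<in>interval_partitions n. prod_list (map e (chunks ks xs)))
      = e xs + (\<Sum>ks\<in>I. prod_list (map e (chunks ks xs)))" for e :: "'a list \<Rightarrow> 'c"
    using sum.remove[OF finite_interval_partitions n_mem, of "\<lambda>ks. prod_list (map e (chunks ks xs))"]
    by (simp add: I_def n_def)
  then show ?case
    using same_sums[OF less.prems] rest by (simp add: n_def)
qed

lemma list_cases012 [case_names Nil single long]:
  "(xs = [] \<Longrightarrow> P) \<Longrightarrow> (\<And>x. xs = [x] \<Longrightarrow> P) \<Longrightarrow> (\<And>x y r. xs = x # y # r \<Longrightarrow> P) \<Longrightarrow> P"
  by (metis remdups_adj.cases)

lemma lift_op_Nil [simp]: "lift_op f [] = []"
  by (simp add: lift_op_def)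

lemma lift_op_Cons [simp]:
  "lift_op f ((c, w) # v) = map (\<lambda>(d, w'). (c * d, w')) (f w) @ lift_op f v"
  by (simp add: lift_op_def)

lemma op_prod_Nil [simp]: "op_prod [] = id"
  by (simp add: op_prod_def)

lemma op_prod_Cons [simp]: "op_prod (f # fs) = f \<circ> op_prod fs"
  by (simp add: op_prod_def)

lemma op_prod_azero_one_particle:
  "op_prod (map (azero L) xs) [(1, [x])] = [(1, [foldr L xs x])]"
  by (induction xs) (auto simp: azero_def)

fun vacuum_coeff :: "'b fvec \<Rightarrow> complex" where
  "vacuum_coeff [] = 0"
| "vacuum_coeff ((c, w) # v) = (if w = [] then c else 0) + vacuum_coeff v"

fun one_particle_part :: "(complex \<Rightarrow> 'b::ring_1 \<Rightarrow> 'b) \<Rightarrow> 'b fvec \<Rightarrow> 'b" where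
  "one_particle_part sc [] = 0"
| "one_particle_part sc ((c, w) # v) = (case w of [x] \<Rightarrow> sc c x | _ \<Rightarrow> 0) + one_particle_part sc v"

lemma vacuum_coeff_append [simp]: "vacuum_coeff (v @ w) = vacuum_coeff v + vacuum_coeff w"
  by (induction v rule: vacuum_coeff.induct) auto

lemma one_particle_part_append [simp]:
  "one_particle_part sc (v @ w) = one_particle_part sc v + one_particle_part sc w"
  by (induction v rule: vacuum_coeff.induct) (auto simp: add.assoc)

lemma fock_ip_vac: "fock_ip sc st phi gamma v vac = vacuum_coeff v"
  by (induction v rule: vacuum_coeff.induct) (auto simp: fock_ip_def vac_def neq_Nil_conv)

lemma vac_state_eq_vacuum_coeff: "vac_state sc st phi gamma A = vacuum_coeff (A vac)"
  by (simp add: vac_state_def fock_ip_vac)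

fun Lambda_chain :: "('b \<Rightarrow> 'b \<Rightarrow> 'b::zero) \<Rightarrow> 'b list \<Rightarrow> 'b" where
  "Lambda_chain L [] = 0"
| "Lambda_chain L [x] = x"
| "Lambda_chain L (x # y # r) = L x (Lambda_chain L (y # r))"

lemma Lambda_chain_eq_foldr: "ys \<noteq> [] \<Longrightarrow> Lambda_chain L ys = foldr L (butlast ys) (last ys)"
  by (induction L ys rule: Lambda_chain.induct) auto

(* The value 0 on singletons is the genuine first cumulant psi(X(u)) = 0; on [] it is junk. *)
fun chain_cumulant :: "('b::ring_1 \<Rightarrow> complex) \<Rightarrow> ('b \<Rightarrow> 'b \<Rightarrow> 'b) \<Rightarrow> 'b list \<Rightarrow> complex" where
  "chain_cumulant phi L (u # v # r) = phi (u * Lambda_chain L (v # r))"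
| "chain_cumulant phi L _ = 0"

locale vanishing_gamma_plus_phi =
  fixes sc :: "complex \<Rightarrow> 'b::ring_1 \<Rightarrow> 'b" and phi :: "'b \<Rightarrow> complex"
    and gamma :: "'b \<Rightarrow> 'b" and L :: "'b \<Rightarrow> 'b \<Rightarrow> 'b"
  assumes sc_add: "\<And>c x y. sc c (x + y) = sc c x + sc c y"
    and sc_add_left: "\<And>c d x. sc (c + d) x = sc c x + sc d x"
    and sc_mult: "\<And>c d x. sc (c * d) x = sc c (sc d x)"
    and sc_right: "\<And>c x y. sc c (x * y) = x * sc c y"
    and phi_add: "\<And>x y. phi (x + y) = phi x + phi y"
    and phi_sc: "\<And>c x. phi (sc c x) = c * phi x"
    and L_add: "\<And>b x y. L b (x + y) = L b x + L b y"
    and L_sc: "\<And>b c x. L b (sc c x) = sc c (L b x)"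
    and gpp_zero: "\<And>b. gpp sc phi gamma b = 0"
begin

lemma sc_zero [simp]: "sc c 0 = 0"
  using sc_add[of c 0 0] by simp

lemma sc_zero_left [simp]: "sc 0 x = 0"
  using sc_add_left[of 0 0 x] by simp

lemma phi_zero [simp]: "phi 0 = 0"
  using phi_add[of 0 0] by simp

lemma L_zero [simp]: "L b 0 = 0"
  using L_add[of b 0 0] by simp

lemma phi_sum: "phi (\<Sum>k<(n::nat). f k) = (\<Sum>k<n. phi (f k))"
  by (induction n) (auto simp: phi_add)

lemma L_sum: "L u (\<Sum>k<(n::nat). f k) = (\<Sum>k<n. L u (f k))"
  by (induction n) (auto simp: L_add)

lemma vacuum_coeff_scale [simp]:
  "vacuum_coeff (map (\<lambda>(d, w'). (c * d, w')) v) = c * vacuum_coeff v"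
  by (induction v rule: vacuum_coeff.induct) (auto simp: algebra_simps)

lemma one_particle_part_scale [simp]:
  "one_particle_part sc (map (\<lambda>(d, w'). (c * d, w')) v) = sc c (one_particle_part sc v)"
  by (induction v rule: vacuum_coeff.induct) (auto simp: sc_add sc_mult split: list.split)

lemma vacuum_coeff_Xop: "vacuum_coeff (Xop sc phi gamma L u v) = phi (u * one_particle_part sc v)"
proof (induction v rule: vacuum_coeff.induct)
  case 1
  then show ?case by (simp add: Xop_def aplus_def aminus_def azero_def)
next
  case (2 c w v)
  then show ?case
    by (cases w rule: list_cases012)
      (auto simp: Xop_def aplus_def aminus_def azero_def distrib_left phi_add phi_sc
        sc_right[symmetric])
qed

lemma one_particle_part_Xop:
  "one_particle_part sc (Xop sc phi gamma L u v) = sc (vacuum_coeff v) u + L u (one_particle_part sc v)"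
proof (induction v rule: vacuum_coeff.induct)
  case 1
  then show ?case by (simp add: Xop_def aplus_def aminus_def azero_def)
next
  case (2 c w v)
  then show ?case
    by (cases w rule: list_cases012)
      (auto simp: Xop_def aplus_def aminus_def azero_def gpp_zero L_add L_sc sc_add_left algebra_simps split: list.split)
qed

abbreviation X_state :: "'b list \<Rightarrow> 'b fvec" where
  "X_state us \<equiv> op_prod (map (Xop sc phi gamma L) us) vac"

lemma one_particle_part_X_state:
  "one_particle_part sc (X_state us) =
     (\<Sum>k<length us. sc (vacuum_coeff (X_state (drop (Suc k) us))) (Lambda_chain L (take (Suc k) us)))"
proof (induction us)
  case Nil
  then show ?case by (simp add: vac_def)
next
  case (Cons u us)
  have "(\<Sum>k<length us. sc (vacuum_coeff (X_state (drop (Suc k) us))) (Lambda_chain L (u # take (Suc k) us)))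
      = L u (\<Sum>k<length us. sc (vacuum_coeff (X_state (drop (Suc k) us))) (Lambda_chain L (take (Suc k) us)))"
    unfolding L_sum
  proof (rule sum.cong)
    fix k assume "k \<in> {..<length us}"
    then obtain y r where "take (Suc k) us = y # r"
      by (cases us) auto
    then show "sc (vacuum_coeff (X_state (drop (Suc k) us))) (Lambda_chain L (u # take (Suc k) us))
      = L u (sc (vacuum_coeff (X_state (drop (Suc k) us))) (Lambda_chain L (take (Suc k) us)))"
      by (simp add: L_sc)
  qed simp
  then show ?case
    using Cons by (simp add: one_particle_part_Xop sum.lessThan_Suc_shift del: sum.lessThan_Suc)
qed

lemma vacuum_coeff_X_state_first_block:
  assumes "us \<noteq> []"
  shows "vacuum_coeff (X_state us) =
    (\<Sum>k<length us. chain_cumulant phi L (take (Suc k) us) * vacuum_coeff (X_state (drop (Suc k) us)))"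
proof -
  obtain u r where us: "us = u # r"
    using assms by (cases us) auto
  have "(\<Sum>k<length r. chain_cumulant phi L (u # take (Suc k) r) * vacuum_coeff (X_state (drop (Suc k) r)))
      = phi (u * one_particle_part sc (X_state r))"
    unfolding one_particle_part_X_state sum_distrib_left phi_sum
  proof (rule sum.cong)
    fix k assume "k \<in> {..<length r}"
    then obtain y z where "take (Suc k) r = y # z"
      by (cases r) auto
    then show "chain_cumulant phi L (u # take (Suc k) r) * vacuum_coeff (X_state (drop (Suc k) r))
      = phi (u * sc (vacuum_coeff (X_state (drop (Suc k) r))) (Lambda_chain L (take (Suc k) r)))"
      by (simp add: sc_right[symmetric] phi_sc)
  qed simp
  then show ?thesis
    using us by (simp add: vacuum_coeff_Xop sum.lessThan_Suc_shift del: sum.lessThan_Suc)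
qed

lemma vac_state_X_moments:
  "vac_state sc st phi gamma (op_prod (map (Xop sc phi gamma L) us)) =
     (\<Sum>ks\<in>interval_partitions (length us). prod_list (map (chain_cumulant phi L) (chunks ks us)))"
  unfolding vac_state_eq_vacuum_coeff
  by (rule sum_interval_partitions_first_block[where m = "\<lambda>us. vacuum_coeff (X_state us)"])
    (simp add: vac_def, simp add: vacuum_coeff_X_state_first_block)

end

theorem corollary3p5:
  fixes sc :: "complex \<Rightarrow> 'b::ring_1 \<Rightarrow> 'b" and st :: "'b \<Rightarrow> 'b"
    and phi :: "'b \<Rightarrow> complex" and gamma :: "'b \<Rightarrow> 'b" and L :: "'b \<Rightarrow> 'b \<Rightarrow> 'b"
    and Bc :: "('b fvec \<Rightarrow> 'b fvec) list \<Rightarrow> complex"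
    and us :: "'b list"
  assumes alg: "complex_star_algebra sc st"
    and phi_lin: "clinear_functional sc phi" and phi_star: "star_functional st phi"
    and gamma_lin: "clinear_map sc gamma" and gamma_star: "star_map st gamma"
    and L_lin: "cbilinear_map sc L" and L_star: "star_bimap st L"
    and phi_pos: "positive_functional st phi" and phi_faithful: "faithful_functional st phi"
    and cp: "completely_positive st (gpp sc phi gamma)"
    and phi_L: "\<forall>b u v. phi (st v * L b u) = phi (st (L (st b) v) * u)"
    and gamma_L: "\<forall>b u v. gamma (st v * L b u) = gamma (st (L (st b) v) * u)"
    and gamma_eq: "\<forall>b. gamma b = sc (- phi b) 1"
    and Bc: "boolean_cumulants (vac_state sc st phi gamma) Bc"
    and n: "length us \<ge> 2"
  shows "Bc (map (Xop sc phi gamma L) us) =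
         vac_state sc st phi gamma
           (aminus sc phi gamma (hd us) \<circ> op_prod (map (azero L) (butlast (tl us))) \<circ> aplus (last us))"
proof -
  have sc_add_left: "sc (c + d) x = sc c x + sc d x" for c d x
    using alg unfolding complex_star_algebra_def by blast
  have sc_right: "sc c (x * y) = x * sc c y" for c x y
    using alg unfolding complex_star_algebra_def by blast
  have gpp_zero: "gpp sc phi gamma b = 0" for b
    using sc_add_left[of "- phi b" "phi b" 1] sc_add_left[of 0 0 1] by (simp add: gpp_def gamma_eq)
  interpret vanishing_gamma_plus_phi sc phi gamma L
    using alg phi_lin L_lin sc_right gpp_zero
    by unfold_locales (auto simp: complex_star_algebra_def clinear_functional_def
        cbilinear_map_def clinear_map_def)
  let ?X = "Xop sc phi gamma L"
  obtain u v r where us: "us = u # v # r"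
    using n by (auto simp: numeral_2_eq_2 Suc_le_length_iff)
  have Bc_moments: "vac_state sc st phi gamma (op_prod (map ?X ws)) =
      (\<Sum>ks\<in>interval_partitions (length ws). prod_list (map (\<lambda>ws. Bc (map ?X ws)) (chunks ks ws)))"
    if "ws \<noteq> []" for ws
    using Bc that by (simp add: boolean_cumulants_def chunks_map comp_def)
  have "Bc (map ?X us) = chain_cumulant phi L us"
    by (rule sum_interval_partitions_unique[where c = "\<lambda>ws. Bc (map ?X ws)"])
      (metis Bc_moments vac_state_X_moments, simp add: us)
  also have "\<dots> = vac_state sc st phi gamma
      (aminus sc phi gamma (hd us) \<circ> op_prod (map (azero L) (butlast (tl us))) \<circ> aplus (last us))"
    by (simp add: us vac_state_eq_vacuum_coeff aplus_def aminus_def vac_def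
        op_prod_azero_one_particle Lambda_chain_eq_foldr)
  finally show ?thesis .
qed

end
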